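(* Let $\tilde S\subseteq\mathfrak P$. Suppose $\tilde O\subseteq\mathcal C_{\mathfrak P}(\tilde S)$ is an unimprovable set with respect to $\tilde S$ that extends to $\tilde X:=\{o\}\cup\tilde X'\subseteq\mathcal C_{\mathfrak P}(\tilde S)$, and suppose there exists $h\in\mathcal C_{\mathfrak P}(\tilde S)$ of weight $\omega_{\tilde S}(o)$ that anticommutes with $o$ but commutes with every operator in $\tilde X'$. Then $\tilde O\cup\{o\}$ is an unimprovable set with respect to $\tilde S$ that extends to $\tilde X'$.
   Context: $\mathfrak P$ is the group of $N$-qubit Pauli operators modulo phases; $\mathcal C_{\mathfrak P}(\tilde S)$ is the centralizer of $\tilde S$; $\Pi(T)$ is the product of the elements of a finite set $T$. The weight of a Pauli operator is its number of non-identity tensor factors. For $l\in\mathcal C_{\mathfrak P}(\tilde S)$, $\omega_{\tilde S}(l)$ is the minimum weight of an $e\in\mathcal C_{\mathfrak P}(\tilde S)$ anticommuting with $l$ ($+\infty$ if none). A set $\tilde O\subseteq\mathcal C_{\mathfrak P}(\tilde S)$ is unimprovable with respect to $\tilde S$ if $\omega_{\tilde S}(\Pi(\tilde Y))=\min_{y\in\tilde Y}\omega_{\tilde S}(y)$ for every $\tilde Y\subseteq\tilde O$; it extends to a set $\tilde Q$ if for every $\tilde Y\subseteq\tilde O\cup\tilde Q$ with $\tilde Y\cap\tilde O\neq\emptyset$, $\omega_{\tilde S}(\Pi(\tilde Y))\le\min_{y\in\tilde Y\cap\tilde O}\omega_{\tilde S}(y)$. *)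

theory Defs
  imports Main "HOL-Library.Extended_Nat"
begin

text \<open>N-qubit Pauli operators modulo phases, in the binary symplectic representation:
  a Pauli operator is a pair (x, z) of bit vectors indexed by qubits; qubit i carries
  I, X, Z, Y according to (x i, z i) = (F,F), (T,F), (F,T), (T,T).\<close>

type_synonym pauli = "(nat \<Rightarrow> bool) \<times> (nat \<Rightarrow> bool)"

definition paulis :: "nat \<Rightarrow> pauli set" where
  "paulis N = {p. \<forall>i\<ge>N. \<not> fst p i \<and> \<not> snd p i}"

definition pmult :: "pauli \<Rightarrow> pauli \<Rightarrow> pauli" where
  "pmult p q = ((\<lambda>i. fst p i \<noteq> fst q i), (\<lambda>i. snd p i \<noteq> snd q i))"

definition pid :: pauli where
  "pid = ((\<lambda>_. False), (\<lambda>_. False))"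

text \<open>Product of the elements of a finite set (the group mod phases is abelian).\<close>
definition prodP :: "pauli set \<Rightarrow> pauli" where
  "prodP T = Finite_Set.fold pmult pid T"

text \<open>Two Paulis anticommute iff they differ non-trivially on an odd number of qubits
  (odd symplectic product).\<close>
definition anticommutes :: "nat \<Rightarrow> pauli \<Rightarrow> pauli \<Rightarrow> bool" where
  "anticommutes N p q \<longleftrightarrow>
     odd (card {i. i < N \<and> ((fst p i \<and> snd q i) \<noteq> (snd p i \<and> fst q i))})"

definition weight :: "nat \<Rightarrow> pauli \<Rightarrow> nat" where
  "weight N p = card {i. i < N \<and> (fst p i \<or> snd p i)}"

definition centralizer :: "nat \<Rightarrow> pauli set \<Rightarrow> pauli set" where
  "centralizer N S = {p \<in> paulis N. \<forall>s\<in>S. \<not> anticommutes N p s}"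

text \<open>\<omega>_S(l): minimum weight of an element of the centralizer anticommuting with l;
  infinity if there is none (Inf of the empty set of enat is \<infinity>).\<close>
definition omega :: "nat \<Rightarrow> pauli set \<Rightarrow> pauli \<Rightarrow> enat" where
  "omega N S l = (INF e \<in> {e \<in> centralizer N S. anticommutes N e l}. enat (weight N e))"

definition unimprovable :: "nat \<Rightarrow> pauli set \<Rightarrow> pauli set \<Rightarrow> bool" where
  "unimprovable N S Ob \<longleftrightarrow> Ob \<subseteq> centralizer N S \<and>
     (\<forall>Y. Y \<subseteq> Ob \<longrightarrow> omega N S (prodP Y) = (INF y \<in> Y. omega N S y))"

definition extends_to :: "nat \<Rightarrow> pauli set \<Rightarrow> pauli set \<Rightarrow> pauli set \<Rightarrow> bool" where
  "extends_to N S Ob Q \<longleftrightarrow>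
     (\<forall>Y. Y \<subseteq> Ob \<union> Q \<longrightarrow> Y \<inter> Ob \<noteq> {} \<longrightarrow> omega N S (prodP Y) \<le> (INF y \<in> Y \<inter> Ob. omega N S y))"

end

theory Submission
  imports Defs
begin

text \<open>Paulis modulo phases form an elementary abelian 2-group, and anticommuting with a
  fixed operator is a homomorphism to \<open>(bool, \<noteq>)\<close>. Hence \<open>\<omega>\<close> is an ultrametric:
  \<open>\<omega>(a b) \<ge> min (\<omega> a) (\<omega> b)\<close>, with equality when \<open>\<omega> a \<noteq> \<omega> b\<close>.
  Adjoining \<open>o\<close> to \<open>O\<close> keeps it unimprovable: for \<open>Y = {o} \<union> Y\<^sub>0\<close> the ultrametric
  inequality gives the lower bound, and when \<open>\<omega> o \<ge> \<omega>(\<Pi> Y\<^sub>0)\<close> the extension property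
  gives the matching upper bound. For the extension to \<open>X'\<close>, write
  \<open>Y = {o} \<union> A \<union> B\<close> with \<open>A \<subseteq> O\<close>, \<open>B \<subseteq> X'\<close>; the bound \<open>\<omega>(\<Pi> Y) \<le> \<omega> o\<close> follows
  since either \<open>h\<close> anticommutes with \<open>\<Pi> Y\<close>, or, commuting with \<open>B\<close> and not with \<open>o\<close>,
  it anticommutes with \<open>\<Pi> A\<close>, whence \<open>\<omega>(\<Pi> Y) \<le> \<omega>(\<Pi> A) \<le> weight h = \<omega> o\<close>.\<close>

lemma pmult_comm: "pmult p q = pmult q p"
  unfolding pmult_def by auto

lemma pmult_pid [simp]: "pmult p pid = p"
  unfolding pmult_def pid_def by (cases p) auto

lemma pmult_cancel_right [simp]: "pmult (pmult p q) q = p"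
  unfolding pmult_def by (cases p) auto

interpretation pmult: comp_fun_commute pmult
  by unfold_locales (auto simp: pmult_def fun_eq_iff)

lemma prodP_empty [simp]: "prodP {} = pid"
  unfolding prodP_def by simp

lemma prodP_insert: "finite A \<Longrightarrow> x \<notin> A \<Longrightarrow> prodP (insert x A) = pmult x (prodP A)"
  unfolding prodP_def by (simp add: pmult.fold_insert)

lemma prodP_Un_disjoint:
  "finite A \<Longrightarrow> finite B \<Longrightarrow> A \<inter> B = {} \<Longrightarrow> prodP (A \<union> B) = pmult (prodP A) (prodP B)"
proof (induction A rule: finite_induct)
  case empty
  then show ?case by (simp add: pmult_comm[of pid])
next
  case (insert x F)
  then show ?case by (simp add: prodP_insert pmult_def fun_eq_iff) blast
qed

lemma prodP_split: "finite Y \<Longrightarrow> prodP Y = pmult (prodP (Y \<inter> C)) (prodP (Y - C))"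
  using prodP_Un_disjoint[of "Y \<inter> C" "Y - C"] by (simp add: Int_Diff_Un) blast

lemma finite_paulis: "finite (paulis N)"
proof -
  let ?F = "(\<lambda>A i. i \<in> A) ` Pow {..<N}"
  have "{f :: nat \<Rightarrow> bool. \<forall>i\<ge>N. \<not> f i} \<subseteq> ?F"
  proof
    fix f :: "nat \<Rightarrow> bool"
    assume "f \<in> {f. \<forall>i\<ge>N. \<not> f i}"
    then have "{i. f i} \<in> Pow {..<N}" "f = (\<lambda>i. i \<in> {i. f i})"
      using not_less by auto
    then show "f \<in> ?F" by blast
  qed
  then have "paulis N \<subseteq> ?F \<times> ?F"
    unfolding paulis_def by auto
  then show ?thesis by (rule finite_subset) auto
qed

lemma finite_centralizer: "finite (centralizer N S)"
  by (rule finite_subset[OF _ finite_paulis]) (auto simp: centralizer_def)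

lemma finite_subset_centralizer: "A \<subseteq> centralizer N S \<Longrightarrow> finite A"
  by (rule finite_subset[OF _ finite_centralizer])

lemma odd_card_neq_iff:
  "odd (card {i. i < (N::nat) \<and> P i \<noteq> Q i})
     \<longleftrightarrow> odd (card {i. i < N \<and> P i}) \<noteq> odd (card {i. i < N \<and> Q i})"
proof (induction N)
  case 0
  then show ?case by simp
next
  case (Suc N)
  have "\<And>R. {i. i < Suc N \<and> R i} = (if R N then insert N {i. i < N \<and> R i} else {i. i < N \<and> R i})"
    using less_Suc_eq by auto
  with Suc show ?case by simp
qed

lemma anticommutes_pmult:
  "anticommutes N e (pmult p q) \<longleftrightarrow> anticommutes N e p \<noteq> anticommutes N e q"
proof -
  have "{i. i < N \<and> ((fst e i \<and> snd (pmult p q) i) \<noteq> (snd e i \<and> fst (pmult p q) i))}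
      = {i. i < N \<and> ((fst e i \<and> snd p i) \<noteq> (snd e i \<and> fst p i))
                   \<noteq> ((fst e i \<and> snd q i) \<noteq> (snd e i \<and> fst q i))}"
    unfolding pmult_def by auto
  then show ?thesis
    unfolding anticommutes_def by (simp only: odd_card_neq_iff)
qed

lemma not_anticommutes_pid [simp]: "\<not> anticommutes N e pid"
  unfolding anticommutes_def pid_def by simp

lemma not_anticommutes_prodP:
  "finite B \<Longrightarrow> \<forall>b\<in>B. \<not> anticommutes N e b \<Longrightarrow> \<not> anticommutes N e (prodP B)"
  by (induction B rule: finite_induct) (auto simp: prodP_insert anticommutes_pmult)

lemma omega_le_weight:
  "e \<in> centralizer N S \<Longrightarrow> anticommutes N e l \<Longrightarrow> omega N S l \<le> enat (weight N e)"
  unfolding omega_def by (rule INF_lower) auto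

lemma omega_pid [simp]: "omega N S pid = \<infinity>"
  unfolding omega_def by (simp add: top_enat_def)

lemma min_omega_le_omega_pmult: "min (omega N S p) (omega N S q) \<le> omega N S (pmult p q)"
  unfolding omega_def
proof (rule INF_greatest)
  fix e
  assume "e \<in> {e \<in> centralizer N S. anticommutes N e (pmult p q)}"
  then have "e \<in> centralizer N S" "anticommutes N e p \<or> anticommutes N e q"
    by (auto simp: anticommutes_pmult)
  then show "min (INF e\<in>{e \<in> centralizer N S. anticommutes N e p}. enat (weight N e))
                 (INF e\<in>{e \<in> centralizer N S. anticommutes N e q}. enat (weight N e))
             \<le> enat (weight N e)"
    by (metis (mono_tags, lifting) INF_lower mem_Collect_eq min.coboundedI1 min.coboundedI2)
qed

lemma omega_pmult_eq_min:
  assumes "omega N S p \<noteq> omega N S q"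
  shows "omega N S (pmult p q) = min (omega N S p) (omega N S q)"
proof -
  have "min (omega N S (pmult p q)) (omega N S q) \<le> omega N S p"
    using min_omega_le_omega_pmult[of N S "pmult p q" q] by simp
  moreover have "min (omega N S (pmult p q)) (omega N S p) \<le> omega N S q"
    using min_omega_le_omega_pmult[of N S "pmult p q" p] by (simp add: pmult_comm[of p])
  ultimately show ?thesis
    using assms min_omega_le_omega_pmult[of N S p q] by (auto simp: min_def split: if_splits)
qed

lemma unimprovable_insert:
  assumes unimp: "unimprovable N S Ob"
    and ext: "extends_to N S Ob Q"
    and "o1 \<in> Q" and "o1 \<in> centralizer N S"
  shows "unimprovable N S (insert o1 Ob)"
  unfolding unimprovable_def
proof (intro conjI allI impI)
  show "insert o1 Ob \<subseteq> centralizer N S"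
    using assms unfolding unimprovable_def by auto
next
  fix Y
  assume Y: "Y \<subseteq> insert o1 Ob"
  have unimpOb: "\<And>Y. Y \<subseteq> Ob \<Longrightarrow> omega N S (prodP Y) = (INF y\<in>Y. omega N S y)"
    using unimp unfolding unimprovable_def by auto
  show "omega N S (prodP Y) = (INF y\<in>Y. omega N S y)"
  proof (cases "o1 \<in> Y - Ob")
    case False
    with Y have "Y \<subseteq> Ob" by auto
    then show ?thesis by (rule unimpOb)
  next
    case True
    define Y0 where "Y0 = Y - {o1}"
    have "Y0 \<subseteq> Ob" using Y unfolding Y0_def by auto
    then have finY0: "finite Y0" and wY0: "omega N S (prodP Y0) = (INF y\<in>Y0. omega N S y)"
      using unimp unimpOb unfolding unimprovable_def by (auto intro: finite_subset_centralizer)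
    have Y_eq: "Y = insert o1 Y0" using True unfolding Y0_def by auto
    have pY: "prodP Y = pmult o1 (prodP Y0)"
      unfolding Y_eq by (rule prodP_insert[OF finY0]) (simp add: Y0_def)
    have infY: "(INF y\<in>Y. omega N S y) = min (omega N S o1) (omega N S (prodP Y0))"
      using Y_eq wY0 by (simp add: inf_min)
    show ?thesis
    proof (cases "Y0 = {} \<or> omega N S o1 \<noteq> omega N S (prodP Y0)")
      case True
      then show ?thesis using pY infY omega_pmult_eq_min[of N S o1 "prodP Y0"] by auto
    next
      case False
      then have "Y \<inter> Ob = Y0" and "Y \<subseteq> Ob \<union> Q"
        using True Y \<open>o1 \<in> Q\<close> unfolding Y0_def by auto
      with ext False have "omega N S (prodP Y) \<le> (INF y\<in>Y0. omega N S y)"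
        unfolding extends_to_def by auto
      moreover have "min (omega N S o1) (omega N S (prodP Y0)) \<le> omega N S (prodP Y)"
        using pY min_omega_le_omega_pmult by simp
      ultimately show ?thesis using infY wY0 False by auto
    qed
  qed
qed

lemma extends_to_insert:
  assumes unimp: "unimprovable N S Ob"
    and ext: "extends_to N S Ob (insert o1 X')"
    and X'_central: "X' \<subseteq> centralizer N S"
    and h: "h \<in> centralizer N S" "enat (weight N h) \<le> omega N S o1"
    and anti_h: "anticommutes N h o1" "\<forall>x\<in>X'. \<not> anticommutes N h x"
  shows "extends_to N S (insert o1 Ob) X'"
  unfolding extends_to_def
proof (intro allI impI)
  fix Y
  assume Y: "Y \<subseteq> insert o1 Ob \<union> X'" and meets: "Y \<inter> insert o1 Ob \<noteq> {}"
  have extOb: "omega N S (prodP Y) \<le> (INF y\<in>Y \<inter> Ob. omega N S y)"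
    if "Y \<inter> Ob \<noteq> {}"
    using ext Y that unfolding extends_to_def by auto
  show "omega N S (prodP Y) \<le> (INF y\<in>Y \<inter> insert o1 Ob. omega N S y)"
  proof (cases "o1 \<in> Y - Ob")
    case False
    then have "Y \<inter> insert o1 Ob = Y \<inter> Ob" by auto
    with meets extOb show ?thesis by auto
  next
    case True
    define A where "A = Y \<inter> Ob"
    have "Ob \<union> X' \<subseteq> centralizer N S"
      using X'_central unimp unfolding unimprovable_def by auto
    then have finY: "finite Y"
      using Y by (metis finite_insert finite_subset finite_subset_centralizer Un_insert_left)
    have Y_meet: "Y \<inter> insert o1 Ob = insert o1 A" and "o1 \<notin> A"
      using True unfolding A_def by auto
    have le_A: "omega N S (prodP Y) \<le> (INF y\<in>A. omega N S y)"
      using extOb unfolding A_def by (cases "Y \<inter> Ob = {}") auto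
    have "\<not> anticommutes N h (prodP (Y - insert o1 Ob))"
      using finY Y anti_h(2) by (intro not_anticommutes_prodP) auto
    then have "anticommutes N h (prodP Y) \<or> anticommutes N h (prodP A)"
      using prodP_split[OF finY, of "insert o1 Ob"] Y_meet \<open>o1 \<notin> A\<close> finY anti_h(1)
      unfolding A_def by (simp add: prodP_insert anticommutes_pmult)
    then have "omega N S (prodP Y) \<le> omega N S o1"
    proof
      assume "anticommutes N h (prodP Y)"
      then show ?thesis using omega_le_weight[OF h(1)] h(2) by (metis order_trans)
    next
      assume "anticommutes N h (prodP A)"
      then have "omega N S (prodP A) \<le> omega N S o1"
        using omega_le_weight[OF h(1)] h(2) by (metis order_trans)
      moreover have "omega N S (prodP A) = (INF y\<in>A. omega N S y)"
        using unimp unfolding unimprovable_def A_def by auto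
      ultimately show ?thesis using le_A by auto
    qed
    with le_A show ?thesis using Y_meet by (simp add: inf_min)
  qed
qed

theorem lemma8:
  fixes N :: nat and S Ob X' :: "pauli set" and o1 h :: pauli
  assumes "S \<subseteq> paulis N"
    and "Ob \<subseteq> centralizer N S"
    and "unimprovable N S Ob"
    and "insert o1 X' \<subseteq> centralizer N S"
    and "extends_to N S Ob (insert o1 X')"
    and "h \<in> centralizer N S"
    and "enat (weight N h) = omega N S o1"
    and "anticommutes N h o1"
    and "\<forall>x\<in>X'. \<not> anticommutes N h x"
  shows "unimprovable N S (Ob \<union> {o1}) \<and> extends_to N S (Ob \<union> {o1}) X'"
proof -
  have "unimprovable N S (insert o1 Ob)"
    using assms(3-5) by (intro unimprovable_insert) auto
  moreover have "extends_to N S (insert o1 Ob) X'"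
    using assms(3-9) by (intro extends_to_insert) auto
  ultimately show ?thesis by simp
qed

end
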